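(* Let $\mathcal{N}$ be a nonzero Gaussian integer and let $y,z$ be real numbers with $y\ge z\ge 2$. Then $$T_1\le \sum_{\mathfrak q:\ z\le N(\mathfrak q)<y} S(\mathcal{A}_{\mathfrak q},\mathcal{P},z)+O\!\left(\frac{N(\mathcal{N})}{z}\right),$$ where $\mathfrak q$ runs over prime ideals, $\mathcal{A}_{\mathfrak q}=\{n\in\mathcal{A}:\ \mathfrak q\mid (n)\}$, and the implied constant is absolute.
   Context: $\mathbb{Z}[i]$ is the ring of Gaussian integers, $N$ the norm. $\mathcal{P}$ is the set of Gaussian primes (prime elements) not dividing $\mathcal{N}$; $\mathcal{A}=\{\mathcal{N}-p:\ p\in\mathcal{P},\ N(p)<N(\mathcal{N})\}$. For $w\ge2$, $P(w)$ is the product of the distinct prime ideals $(p)$, $p\in\mathcal{P}$, $N(p)<w$. For finite $\mathcal{B}\subset\mathbb{Z}[i]$, $S(\mathcal{B},\mathcal{P},w)=\#\{n\in\mathcal{B}:\ (n)+P(w)=\mathbb{Z}[i]\}$. $T_1=\sum_{n\in\mathcal{A},\ (n)+P(z)=\mathbb{Z}[i]}\ \sum_{\mathfrak q:\ z\le N(\mathfrak q)<y,\ \mathfrak q^k\|(n)}k$, summing over prime ideals $\mathfrak q$ dividing $(n)$ with $k$ the exact exponent. *)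

theory Defs
  imports Complex_Main
begin

definition ZI :: "complex set" where
  "ZI = {a. Re a \<in> \<int> \<and> Im a \<in> \<int>}"

definition gdvd :: "complex \<Rightarrow> complex \<Rightarrow> bool" where
  "gdvd a b \<longleftrightarrow> a \<in> ZI \<and> b \<in> ZI \<and> (\<exists>c\<in>ZI. b = a * c)"

definition gnorm :: "complex \<Rightarrow> real" where
  "gnorm a = (Re a)\<^sup>2 + (Im a)\<^sup>2"

definition gunit :: "complex \<Rightarrow> bool" where
  "gunit a \<longleftrightarrow> gdvd a 1"

definition gprime :: "complex \<Rightarrow> bool" where
  "gprime p \<longleftrightarrow> p \<in> ZI \<and> p \<noteq> 0 \<and> \<not> gunit p \<and>
     (\<forall>a\<in>ZI. \<forall>b\<in>ZI. gdvd p (a * b) \<longrightarrow> gdvd p a \<or> gdvd p b)"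

definition is_gideal :: "complex set \<Rightarrow> bool" where
  "is_gideal I \<longleftrightarrow> I \<subseteq> ZI \<and> 0 \<in> I \<and> (\<forall>a\<in>I. \<forall>b\<in>I. a + b \<in> I \<and> - a \<in> I) \<and>
     (\<forall>a\<in>I. \<forall>c\<in>ZI. c * a \<in> I)"

definition gideal :: "complex \<Rightarrow> complex set" where
  "gideal a = {a * c | c. c \<in> ZI}"

text \<open>Prime ideals of Z[i] (the zero ideal included; it has norm 0 below
and never occurs in the sums of the statement).\<close>
definition is_prime_gideal :: "complex set \<Rightarrow> bool" where
  "is_prime_gideal P \<longleftrightarrow> is_gideal P \<and> P \<noteq> ZI \<and>
     (\<forall>a\<in>ZI. \<forall>b\<in>ZI. a * b \<in> P \<longrightarrow> a \<in> P \<or> b \<in> P)"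

definition ideal_norm :: "complex set \<Rightarrow> real" where
  "ideal_norm I = real (card (ZI // {(a, b). a \<in> ZI \<and> b \<in> ZI \<and> a - b \<in> I}))"

definition ideal_sum :: "complex set \<Rightarrow> complex set \<Rightarrow> complex set" where
  "ideal_sum I J = {a + b | a b. a \<in> I \<and> b \<in> J}"

definition ideal_mult :: "complex set \<Rightarrow> complex set \<Rightarrow> complex set" where
  "ideal_mult I J = \<Inter> {K. is_gideal K \<and> {a * b | a b. a \<in> I \<and> b \<in> J} \<subseteq> K}"

primrec ideal_pow :: "complex set \<Rightarrow> nat \<Rightarrow> complex set" where
  "ideal_pow I 0 = ZI"
| "ideal_pow I (Suc k) = ideal_mult I (ideal_pow I k)"

definition ideal_exp :: "complex set \<Rightarrow> complex \<Rightarrow> nat" where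
  "ideal_exp q n = (GREATEST k. gideal n \<subseteq> ideal_pow q k)"

definition Pset :: "complex \<Rightarrow> complex set" where
  "Pset NN = {p. gprime p \<and> \<not> gdvd p NN}"

definition Aset :: "complex \<Rightarrow> complex set" where
  "Aset NN = {NN - p | p. p \<in> Pset NN \<and> gnorm p < gnorm NN}"

text \<open>P(w): product of the distinct prime ideals (p), p in \<P>, N(p) < w.
Each of these ideals is principal; their product is generated by the
product of (chosen) generators.\<close>
definition PP :: "complex \<Rightarrow> real \<Rightarrow> complex set" where
  "PP NN w = gideal (\<Prod>q\<in>{gideal p | p. p \<in> Pset NN \<and> gnorm p < w}.
                       (SOME a. q = gideal a))"

definition sift :: "complex set \<Rightarrow> complex \<Rightarrow> real \<Rightarrow> nat" where
  "sift B NN w = card {n \<in> B. ideal_sum (gideal n) (PP NN w) = ZI}"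

definition Aq :: "complex \<Rightarrow> complex set \<Rightarrow> complex set" where
  "Aq NN q = {n \<in> Aset NN. gideal n \<subseteq> q}"

definition T1 :: "complex \<Rightarrow> real \<Rightarrow> real \<Rightarrow> real" where
  "T1 NN z y = (\<Sum>n\<in>{n \<in> Aset NN. ideal_sum (gideal n) (PP NN z) = ZI}.
      \<Sum>q\<in>{q. is_prime_gideal q \<and> z \<le> ideal_norm q \<and> ideal_norm q < y \<and> gideal n \<subseteq> q}.
        real (ideal_exp q n))"

end

theory Submission
  imports Defs
begin

text \<open>Every prime ideal q is principal, q = (p) with N(p) \<ge> 2. An element n counted in
  T1 with q^k || (n) contributes k to T1 and 1 to the sifting function of A_q, so the
  difference of the two sides is the sum of k - 1, which is at most the number of k \<ge> 2
  with p^k | n. All elements of A lie in the disc of radius 2|NN|, which contains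
  O(N(NN) / N(p)^k) multiples of p^k; summing over k \<ge> 2 gives O(N(NN) / N(p)^2) for each q.
  Since the residues modulo p can be taken in the disc of radius |p|, N(q) \<le> 9 N(p), so
  N(p) \<ge> z / 9, and the sum of N(p)^-2 over distinct Gaussian integers of norm at least w
  is O(1 / w), as one sees by comparing it with a product of two one-dimensional sums.\<close>

lemma mem_ZI_iff: "x \<in> ZI \<longleftrightarrow> (\<exists>a b. x = Complex (of_int a) (of_int b))"
proof
  assume "x \<in> ZI"
  then obtain a b where "Re x = of_int a" "Im x = of_int b"
    unfolding ZI_def by (auto elim!: Ints_cases)
  then show "\<exists>a b. x = Complex (of_int a) (of_int b)"
    by (metis complex_surj)
qed (auto simp: ZI_def)

lemma ZI_0 [simp]: "0 \<in> ZI"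
  and ZI_1 [simp]: "1 \<in> ZI"
  and ZI_of_nat [simp]: "of_nat n \<in> ZI"
  and ZI_uminus [simp]: "a \<in> ZI \<Longrightarrow> - a \<in> ZI"
  and ZI_add [simp]: "a \<in> ZI \<Longrightarrow> b \<in> ZI \<Longrightarrow> a + b \<in> ZI"
  and ZI_diff [simp]: "a \<in> ZI \<Longrightarrow> b \<in> ZI \<Longrightarrow> a - b \<in> ZI"
  and ZI_mult [simp]: "a \<in> ZI \<Longrightarrow> b \<in> ZI \<Longrightarrow> a * b \<in> ZI"
  and ZI_cnj [simp]: "a \<in> ZI \<Longrightarrow> cnj a \<in> ZI"
  by (auto simp: ZI_def)

lemma ZI_power [simp]: "a \<in> ZI \<Longrightarrow> a ^ k \<in> ZI"
  by (induction k) auto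

lemma gnorm_eq_cmod_square: "gnorm x = (cmod x)\<^sup>2"
  by (simp add: gnorm_def cmod_power2)

lemma gnorm_mult: "gnorm (a * b) = gnorm a * gnorm b"
  by (simp add: gnorm_eq_cmod_square norm_mult power_mult_distrib)

lemma gnorm_power: "gnorm (a ^ k) = gnorm a ^ k"
  by (simp add: gnorm_eq_cmod_square norm_power power_mult[symmetric] mult.commute)

lemma gnorm_nonneg: "0 \<le> gnorm x"
  by (simp add: gnorm_eq_cmod_square)

lemma gnorm_eq_0_iff [simp]: "gnorm x = 0 \<longleftrightarrow> x = 0"
  by (simp add: gnorm_eq_cmod_square)

lemma gnorm_0 [simp]: "gnorm 0 = 0"
  by simp

lemma gnorm_in_Nats: "x \<in> ZI \<Longrightarrow> gnorm x \<in> \<nat>"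
proof -
  assume "x \<in> ZI"
  then obtain a b where "x = Complex (of_int a) (of_int b)" by (auto simp: mem_ZI_iff)
  then have "gnorm x = of_nat (nat (a\<^sup>2 + b\<^sup>2))" by (simp add: gnorm_def)
  then show ?thesis by (metis of_nat_in_Nats)
qed

lemma gnorm_ge_1: "x \<in> ZI \<Longrightarrow> x \<noteq> 0 \<Longrightarrow> 1 \<le> gnorm x"
  by (metis gnorm_eq_0_iff gnorm_in_Nats Nats_cases of_nat_0 of_nat_1 of_nat_le_iff
      less_one not_less)

lemma gnorm_ge_2: "x \<in> ZI \<Longrightarrow> 1 < gnorm x \<Longrightarrow> 2 \<le> gnorm x"
  by (metis gnorm_in_Nats Nats_cases of_nat_1 of_nat_less_iff of_nat_le_iff
      Suc_leI Suc_1 of_nat_numeral)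

lemma cmod_ge_1: "x \<in> ZI \<Longrightarrow> x \<noteq> 0 \<Longrightarrow> 1 \<le> cmod x"
proof -
  assume "x \<in> ZI" "x \<noteq> 0"
  then have "1\<^sup>2 \<le> (cmod x)\<^sup>2" using gnorm_ge_1[of x] by (simp add: gnorm_eq_cmod_square)
  then show ?thesis by (rule power2_le_imp_le) simp
qed

text \<open>The quotient is obtained by rounding the real and imaginary parts of a / b.\<close>

lemma ZI_division:
  assumes "a \<in> ZI" "b \<in> ZI" "b \<noteq> 0"
  obtains c where "c \<in> ZI" "gnorm (a - b * c) \<le> gnorm b / 2"
proof -
  define w where "w = a / b"
  define c where "c = Complex (of_int (round (Re w))) (of_int (round (Im w)))"
  have "gnorm (w - c) \<le> 1/2"
  proof -
    have "\<bar>Re w - of_int (round (Re w))\<bar> \<le> 1/2" "\<bar>Im w - of_int (round (Im w))\<bar> \<le> 1/2"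
      using of_int_round_abs_le[of "Re w"] of_int_round_abs_le[of "Im w"] by linarith+
    then have "\<bar>Re w - of_int (round (Re w))\<bar>\<^sup>2 \<le> (1/2)\<^sup>2" "\<bar>Im w - of_int (round (Im w))\<bar>\<^sup>2 \<le> (1/2)\<^sup>2"
      by (intro power_mono; simp)+
    then have "(Re w - of_int (round (Re w)))\<^sup>2 \<le> 1/4" "(Im w - of_int (round (Im w)))\<^sup>2 \<le> 1/4"
      by (simp_all add: power_divide)
    then show ?thesis by (simp add: gnorm_def c_def)
  qed
  moreover have "a - b * c = b * (w - c)"
    using assms(3) by (simp add: w_def field_simps)
  then have "gnorm (a - b * c) = gnorm b * gnorm (w - c)"
    by (simp add: gnorm_mult)
  ultimately have "gnorm (a - b * c) \<le> gnorm b * (1/2)"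
    by (metis mult_left_mono gnorm_nonneg)
  moreover have "c \<in> ZI" by (auto simp: c_def ZI_def)
  ultimately show ?thesis using that by simp
qed

section \<open>Lattice points in discs\<close>

lemma ZI_disc_subset_box:
  "{x \<in> ZI. cmod x \<le> r} \<subseteq>
     (\<lambda>(a, b). Complex (of_int a) (of_int b)) ` ({-\<lfloor>r\<rfloor>..\<lfloor>r\<rfloor>} \<times> {-\<lfloor>r\<rfloor>..\<lfloor>r\<rfloor>})"
proof
  fix x assume "x \<in> {x \<in> ZI. cmod x \<le> r}"
  then obtain a b where x: "x = Complex (of_int a) (of_int b)" and r: "cmod x \<le> r"
    by (auto simp: mem_ZI_iff)
  have "\<bar>of_int a\<bar> \<le> r" "\<bar>of_int b\<bar> \<le> r"
    using abs_Re_le_cmod[of x] abs_Im_le_cmod[of x] r x by simp_all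
  then have "\<bar>a\<bar> \<le> \<lfloor>r\<rfloor>" "\<bar>b\<bar> \<le> \<lfloor>r\<rfloor>"
    by (simp_all add: le_floor_iff)
  then show "x \<in> (\<lambda>(a, b). Complex (of_int a) (of_int b)) ` ({-\<lfloor>r\<rfloor>..\<lfloor>r\<rfloor>} \<times> {-\<lfloor>r\<rfloor>..\<lfloor>r\<rfloor>})"
    using x by (auto intro!: image_eqI[where x = "(a, b)"])
qed

lemma finite_ZI_disc: "finite {x \<in> ZI. cmod x \<le> r}"
  by (rule finite_subset[OF ZI_disc_subset_box]) auto

lemma card_ZI_disc_le:
  assumes "0 \<le> r"
  shows "real (card {x \<in> ZI. cmod x \<le> r}) \<le> (2 * r + 1)\<^sup>2"
proof -
  let ?L = "\<lfloor>r\<rfloor>"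
  have "card {x \<in> ZI. cmod x \<le> r} \<le>
      card ((\<lambda>(a, b). Complex (of_int a) (of_int b)) ` ({-?L..?L} \<times> {-?L..?L}))"
    by (rule card_mono[OF _ ZI_disc_subset_box]) auto
  also have "\<dots> \<le> card ({-?L..?L} \<times> {-?L..?L})"
    by (rule card_image_le) auto
  also have "\<dots> = (nat (2 * ?L + 1))\<^sup>2"
    by (simp add: card_cartesian_product power2_eq_square)
  finally have "real (card {x \<in> ZI. cmod x \<le> r}) \<le> real ((nat (2 * ?L + 1))\<^sup>2)"
    by linarith
  also have "\<dots> = (of_int (2 * ?L + 1))\<^sup>2"
    using assms by simp
  also have "\<dots> \<le> (2 * r + 1)\<^sup>2"
    using assms by (intro power_mono) auto
  finally show ?thesis .
qed

lemma card_ZI_multiples_le: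
  assumes m: "m \<in> ZI" "m \<noteq> 0"
  shows "real (card {n \<in> ZI. n \<noteq> 0 \<and> cmod n < R \<and> gdvd m n}) \<le> 9 * R\<^sup>2 / gnorm m"
proof -
  define \<rho> where "\<rho> = R / cmod m"
  let ?C = "{c \<in> ZI. c \<noteq> 0 \<and> cmod c \<le> \<rho>}"
  have "{n \<in> ZI. n \<noteq> 0 \<and> cmod n < R \<and> gdvd m n} \<subseteq> (\<lambda>c. m * c) ` ?C"
  proof
    fix n assume "n \<in> {n \<in> ZI. n \<noteq> 0 \<and> cmod n < R \<and> gdvd m n}"
    then obtain c where c: "c \<in> ZI" "n = m * c" "n \<noteq> 0" "cmod m * cmod c < R"
      by (auto simp: gdvd_def norm_mult)
    then have "cmod c \<le> \<rho>"
      using m by (simp add: \<rho>_def field_simps)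
    then show "n \<in> (\<lambda>c. m * c) ` ?C" using c by auto
  qed
  moreover have fin: "finite ?C"
    by (rule finite_subset[OF _ finite_ZI_disc[of \<rho>]]) auto
  ultimately have "card {n \<in> ZI. n \<noteq> 0 \<and> cmod n < R \<and> gdvd m n} \<le> card ?C"
    by (meson card_image_le card_mono finite_imageI order_trans)
  moreover have "real (card ?C) \<le> 9 * R\<^sup>2 / gnorm m"
  proof (cases "?C = {}")
    case True
    then have "card ?C = 0" by (simp only: card.empty)
    then show ?thesis by (simp add: gnorm_nonneg)
  next
    case False
    then have "1 \<le> \<rho>" using cmod_ge_1 by force
    have "real (card ?C) \<le> real (card {x \<in> ZI. cmod x \<le> \<rho>})"
      by (simp, rule card_mono[OF finite_ZI_disc]) auto
    also have "\<dots> \<le> (2 * \<rho> + 1)\<^sup>2"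
      using \<open>1 \<le> \<rho>\<close> by (intro card_ZI_disc_le) simp
    also have "\<dots> \<le> (3 * \<rho>)\<^sup>2"
      using \<open>1 \<le> \<rho>\<close> by (intro power_mono) auto
    also have "\<dots> = 9 * R\<^sup>2 / gnorm m"
      by (simp add: \<rho>_def gnorm_eq_cmod_square power_mult_distrib power_divide)
    finally show ?thesis .
  qed
  ultimately show ?thesis by linarith
qed

lemma mem_gideal_iff: "x \<in> gideal a \<longleftrightarrow> (\<exists>c \<in> ZI. x = a * c)"
  by (auto simp: gideal_def)

lemma mem_gideal_self: "a \<in> ZI \<Longrightarrow> a \<in> gideal a"
  by (auto simp: mem_gideal_iff intro!: bexI[of _ 1])

lemma gideal_0: "gideal 0 = {0}"
  by (auto simp: mem_gideal_iff) (use ZI_0 in blast)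

lemma gideal_1: "gideal 1 = ZI"
  by (auto simp: mem_gideal_iff)

lemma is_gideal_gideal:
  assumes "a \<in> ZI"
  shows "is_gideal (gideal a)"
proof -
  have "x + y \<in> gideal a \<and> - x \<in> gideal a" if xy: "x \<in> gideal a" "y \<in> gideal a" for x y
  proof -
    obtain c d where "c \<in> ZI" "x = a * c" "d \<in> ZI" "y = a * d"
      using xy unfolding mem_gideal_iff by blast
    then have "x + y = a * (c + d)" "- x = a * (- c)" "c + d \<in> ZI" "- c \<in> ZI"
      by (simp_all add: distrib_left)
    then show ?thesis
      unfolding mem_gideal_iff by blast
  qed
  moreover have "c * x \<in> gideal a" if x: "x \<in> gideal a" and c: "c \<in> ZI" for x c
  proof -
    obtain d where "d \<in> ZI" "x = a * d"
      using x unfolding mem_gideal_iff by blast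
    then have "c * x = a * (c * d)" "c * d \<in> ZI"
      using c by (simp_all add: mult.left_commute)
    then show ?thesis
      unfolding mem_gideal_iff by blast
  qed
  moreover have "gideal a \<subseteq> ZI"
    using assms by (auto simp: mem_gideal_iff)
  moreover have "0 \<in> gideal a"
    unfolding mem_gideal_iff by (rule bexI[of _ 0]) simp_all
  ultimately show ?thesis
    unfolding is_gideal_def by blast
qed

lemma gideal_subset_iff_gdvd:
  assumes "a \<in> ZI" "n \<in> ZI"
  shows "gideal n \<subseteq> gideal a \<longleftrightarrow> gdvd a n"
proof
  assume "gideal n \<subseteq> gideal a"
  then have "n \<in> gideal a"
    using mem_gideal_self[OF assms(2)] by blast
  then show "gdvd a n"
    using assms by (simp add: gdvd_def mem_gideal_iff)
next
  assume "gdvd a n"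
  then obtain c where c: "c \<in> ZI" "n = a * c"
    by (auto simp: gdvd_def)
  show "gideal n \<subseteq> gideal a"
  proof
    fix x assume "x \<in> gideal n"
    then obtain d where "d \<in> ZI" "x = n * d"
      unfolding mem_gideal_iff by blast
    then have "x = a * (c * d)" "c * d \<in> ZI"
      using c by (simp_all add: mult.assoc)
    then show "x \<in> gideal a"
      unfolding mem_gideal_iff by blast
  qed
qed

lemma ideal_mult_gideal:
  assumes "a \<in> ZI" "b \<in> ZI"
  shows "ideal_mult (gideal a) (gideal b) = gideal (a * b)"
proof
  have "x * y \<in> gideal (a * b)" if xy: "x \<in> gideal a" "y \<in> gideal b" for x y
  proof -
    obtain c d where "c \<in> ZI" "x = a * c" "d \<in> ZI" "y = b * d"
      using xy unfolding mem_gideal_iff by blast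
    then have "x * y = (a * b) * (c * d)" "c * d \<in> ZI"
      by (simp_all add: ac_simps)
    then show ?thesis
      unfolding mem_gideal_iff by blast
  qed
  then have "{x * y |x y. x \<in> gideal a \<and> y \<in> gideal b} \<subseteq> gideal (a * b)"
    by blast
  then show "ideal_mult (gideal a) (gideal b) \<subseteq> gideal (a * b)"
    unfolding ideal_mult_def using is_gideal_gideal[of "a * b"] assms by (intro Inter_lower) simp
next
  show "gideal (a * b) \<subseteq> ideal_mult (gideal a) (gideal b)"
    unfolding ideal_mult_def
  proof (rule Inter_greatest, rule subsetI)
    fix K x
    assume "K \<in> {K. is_gideal K \<and> {x * y |x y. x \<in> gideal a \<and> y \<in> gideal b} \<subseteq> K}"
    then have K: "is_gideal K" and products: "{x * y |x y. x \<in> gideal a \<and> y \<in> gideal b} \<subseteq> K"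
      by auto
    assume "x \<in> gideal (a * b)"
    then obtain c where "c \<in> ZI" "x = c * (a * b)"
      unfolding mem_gideal_iff by (metis mult.commute)
    moreover have "a * b \<in> K"
      using products mem_gideal_self[OF assms(1)] mem_gideal_self[OF assms(2)] by blast
    ultimately show "x \<in> K"
      using K unfolding is_gideal_def by blast
  qed
qed

lemma ideal_pow_gideal: "a \<in> ZI \<Longrightarrow> ideal_pow (gideal a) k = gideal (a ^ k)"
  by (induction k) (auto simp: gideal_1 ideal_mult_gideal)

text \<open>Every ideal is generated by a nonzero element of least norm, by division with remainder.\<close>

lemma is_gideal_principal:
  assumes I: "is_gideal I"
  obtains p where "p \<in> ZI" "I = gideal p"
proof (cases "I \<subseteq> {0}")
  case True
  then have "I = gideal 0"
    using I by (auto simp: is_gideal_def gideal_0)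
  then show ?thesis using that ZI_0 by blast
next
  case False
  have IZ: "I \<subseteq> ZI" and closed: "\<And>a b c. a \<in> I \<Longrightarrow> b \<in> I \<Longrightarrow> c \<in> ZI \<Longrightarrow> a - c * b \<in> I"
    using I unfolding is_gideal_def by (metis diff_conv_add_uminus)+
  define size :: "complex \<Rightarrow> nat" where "size x = nat \<lfloor>gnorm x\<rfloor>" for x
  have size: "real (size x) = gnorm x" if "x \<in> ZI" for x
    using gnorm_in_Nats[OF that] by (auto simp: size_def elim: Nats_cases)
  obtain p where p: "p \<in> I" "p \<noteq> 0" and least: "\<And>y. y \<in> I \<Longrightarrow> y \<noteq> 0 \<Longrightarrow> size p \<le> size y"
    using False ex_has_least_nat[of "\<lambda>x. x \<in> I \<and> x \<noteq> 0" _ size] by blast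
  have "I = gideal p"
  proof
    show "gideal p \<subseteq> I"
    proof
      fix x assume "x \<in> gideal p"
      then obtain c where "c \<in> ZI" "x = c * p"
        by (auto simp: mem_gideal_iff mult.commute)
      then show "x \<in> I"
        using I p(1) unfolding is_gideal_def by blast
    qed
  next
    show "I \<subseteq> gideal p"
    proof
      fix a assume "a \<in> I"
      obtain c where c: "c \<in> ZI" "gnorm (a - p * c) \<le> gnorm p / 2"
        using ZI_division[of a p] \<open>a \<in> I\<close> p IZ by blast
      have "a - p * c \<in> I"
        using closed[OF \<open>a \<in> I\<close> p(1) c(1)] by (simp add: mult.commute)
      moreover have "gnorm (a - p * c) < gnorm p"
        using c(2) gnorm_ge_1[of p] p IZ by auto
      ultimately have "a - p * c = 0"
        using least[of "a - p * c"] size IZ p(1) by (metis of_nat_le_iff not_le subsetD)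
      then show "a \<in> gideal p"
        using c(1) by (auto simp: mem_gideal_iff)
    qed
  qed
  then show ?thesis using that p IZ by blast
qed

definition ideal_generator :: "complex set \<Rightarrow> complex" where
  "ideal_generator I = (SOME p. p \<in> ZI \<and> I = gideal p)"

lemma ideal_generator:
  assumes "is_gideal I"
  shows "ideal_generator I \<in> ZI" "I = gideal (ideal_generator I)"
proof -
  have "\<exists>p. p \<in> ZI \<and> I = gideal p"
    using is_gideal_principal[OF assms] by blast
  then have "ideal_generator I \<in> ZI \<and> I = gideal (ideal_generator I)"
    unfolding ideal_generator_def by (rule someI_ex)
  then show "ideal_generator I \<in> ZI" "I = gideal (ideal_generator I)" by auto
qed

lemma gideal_eq_ZI_if_gnorm_1:
  assumes "p \<in> ZI" "gnorm p = 1"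
  shows "gideal p = ZI"
proof -
  have "p * cnj p = complex_of_real (gnorm p)"
    by (simp add: complex_eq_iff gnorm_def power2_eq_square)
  then have "p * cnj p = 1"
    using assms(2) by simp
  have "x \<in> gideal p" if "x \<in> ZI" for x
  proof -
    have "x = p * (cnj p * x)" "cnj p * x \<in> ZI"
      using \<open>p * cnj p = 1\<close> assms(1) that by (simp_all add: mult.assoc[symmetric])
    then show ?thesis
      unfolding mem_gideal_iff by blast
  qed
  then have "ZI \<subseteq> gideal p"
    by blast
  then show ?thesis
    using is_gideal_gideal[OF assms(1)] by (auto simp: is_gideal_def)
qed

section \<open>The norm of an ideal\<close>

definition congruent_mod :: "complex set \<Rightarrow> (complex \<times> complex) set" where
  "congruent_mod I = {(a, b). a \<in> ZI \<and> b \<in> ZI \<and> a - b \<in> I}"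

lemma ideal_norm_eq_card_quotient: "ideal_norm I = real (card (ZI // congruent_mod I))"
  by (simp add: ideal_norm_def congruent_mod_def)

lemma equiv_congruent_mod:
  assumes "is_gideal I"
  shows "equiv ZI (congruent_mod I)"
proof (rule equivI)
  have "0 \<in> I" and neg: "\<And>a. a \<in> I \<Longrightarrow> - a \<in> I"
    and add: "\<And>a b. a \<in> I \<Longrightarrow> b \<in> I \<Longrightarrow> a + b \<in> I"
    using assms by (auto simp: is_gideal_def)
  then show "refl_on ZI (congruent_mod I)"
    by (auto simp: refl_on_def congruent_mod_def)
  show "congruent_mod I \<subseteq> ZI \<times> ZI"
    by (auto simp: congruent_mod_def)
  show "sym (congruent_mod I)"
  proof (rule symI)
    fix a b assume "(a, b) \<in> congruent_mod I"
    then show "(b, a) \<in> congruent_mod I"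
      using neg[of "a - b"] by (simp add: congruent_mod_def)
  qed
  show "trans (congruent_mod I)"
  proof (rule transI)
    fix a b c assume "(a, b) \<in> congruent_mod I" "(b, c) \<in> congruent_mod I"
    then show "(a, c) \<in> congruent_mod I"
      using add[of "a - b" "b - c"] by (simp add: congruent_mod_def)
  qed
qed

lemma card_quotient_ge:
  assumes "0 \<in> I" "finite (ZI // congruent_mod I)"
    and incongruent: "\<And>j j'. j < m \<Longrightarrow> j' < m \<Longrightarrow> j \<noteq> j' \<Longrightarrow> (of_nat j - of_nat j' :: complex) \<notin> I"
  shows "m \<le> card (ZI // congruent_mod I)"
proof -
  let ?class = "\<lambda>j::nat. congruent_mod I `` {of_nat j}"
  have "inj_on ?class {..<m}"
  proof (rule inj_onI)
    fix j j' assume "j \<in> {..<m}" "j' \<in> {..<m}" "?class j = ?class j'"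
    moreover have "of_nat j' \<in> ?class j'"
      using assms(1) by (simp add: congruent_mod_def)
    ultimately have "of_nat j' \<in> ?class j"
      by simp
    then have "(of_nat j - of_nat j' :: complex) \<in> I"
      by (simp add: congruent_mod_def)
    then show "j = j'"
      using incongruent[of j j'] \<open>j \<in> {..<m}\<close> \<open>j' \<in> {..<m}\<close> by auto
  qed
  then have "m = card (?class ` {..<m})"
    by (simp add: card_image)
  also have "\<dots> \<le> card (ZI // congruent_mod I)"
    by (rule card_mono[OF assms(2)]) (auto intro: quotientI)
  finally show ?thesis .
qed

text \<open>The quotient by the zero ideal is infinite, and card yields 0 on infinite sets.\<close>

lemma ideal_norm_gideal_0: "ideal_norm (gideal 0) = 0"
proof (rule ccontr)
  let ?Q = "ZI // congruent_mod (gideal 0)"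
  assume "ideal_norm (gideal 0) \<noteq> 0"
  then have "finite ?Q"
    by (auto simp: ideal_norm_eq_card_quotient card_eq_0_iff)
  have "Suc (card ?Q) \<le> card ?Q"
    by (rule card_quotient_ge[OF _ \<open>finite ?Q\<close>]) (auto simp: gideal_0)
  then show False by simp
qed

lemma cmod_le_ideal_norm_gideal:
  assumes p: "p \<in> ZI" and pos: "0 < ideal_norm (gideal p)"
  shows "cmod p \<le> ideal_norm (gideal p)"
proof -
  define m where "m = nat \<lceil>cmod p\<rceil>"
  have "m \<le> card (ZI // congruent_mod (gideal p))"
  proof (rule card_quotient_ge)
    show "0 \<in> gideal p" "finite (ZI // congruent_mod (gideal p))"
      using pos gideal_0 is_gideal_gideal[OF p(1)]
      by (auto simp: ideal_norm_eq_card_quotient is_gideal_def intro: card_ge_0_finite)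
  next
    fix j j' assume "j < m" "j' < m" "j \<noteq> j'"
    show "(of_nat j - of_nat j' :: complex) \<notin> gideal p"
    proof
      assume "(of_nat j - of_nat j' :: complex) \<in> gideal p"
      then obtain c where c: "c \<in> ZI" "of_int (int j - int j') = p * c"
        by (auto simp: mem_gideal_iff)
      then have "c \<noteq> 0" using \<open>j \<noteq> j'\<close> by auto
      then have "cmod p \<le> cmod p * cmod c"
        using cmod_ge_1[OF c(1)] by (metis mult_left_mono mult_1_right norm_ge_zero)
      also have "\<dots> = \<bar>of_int (int j - int j')\<bar>"
        using c(2) by (metis norm_mult norm_of_int)
      also have "\<dots> < cmod p"
        using \<open>j < m\<close> \<open>j' < m\<close> by (simp add: m_def) linarith
      finally show False by simp
    qed
  qed
  then show ?thesis
    by (simp add: ideal_norm_eq_card_quotient m_def)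
qed

text \<open>Every residue class modulo (p) has a representative of modulus at most that of p.\<close>

lemma ideal_norm_gideal_le:
  assumes "p \<in> ZI"
  shows "ideal_norm (gideal p) \<le> 9 * gnorm p"
proof (cases "p = 0")
  case True
  then show ?thesis by (simp add: ideal_norm_gideal_0)
next
  case False
  with assms have p: "p \<in> ZI" "p \<noteq> 0" by simp_all
  let ?R = "congruent_mod (gideal p)"
  let ?B = "{x \<in> ZI. cmod x \<le> cmod p}"
  have "ZI // ?R \<subseteq> (\<lambda>x. ?R `` {x}) ` ?B"
  proof
    fix X assume "X \<in> ZI // ?R"
    then obtain a where a: "a \<in> ZI" "X = ?R `` {a}"
      by (auto elim: quotientE)
    obtain c where c: "c \<in> ZI" "gnorm (a - p * c) \<le> gnorm p / 2"
      using ZI_division[OF a(1) p] .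
    let ?r = "a - p * c"
    have "(cmod ?r)\<^sup>2 \<le> (cmod p)\<^sup>2"
      using c(2) gnorm_nonneg[of p] unfolding gnorm_eq_cmod_square by linarith
    then have "cmod ?r \<le> cmod p"
      by (rule power2_le_imp_le) simp
    then have "?r \<in> ?B"
      using a c p by simp
    moreover have "(a, ?r) \<in> ?R"
      using a c p by (auto simp: congruent_mod_def mem_gideal_iff)
    then have "X = ?R `` {?r}"
      using a(2) equiv_class_eq[OF equiv_congruent_mod[OF is_gideal_gideal[OF p(1)]]] by simp
    ultimately show "X \<in> (\<lambda>x. ?R `` {x}) ` ?B" by blast
  qed
  then have "card (ZI // ?R) \<le> card ((\<lambda>x. ?R `` {x}) ` ?B)"
    by (intro card_mono finite_imageI finite_ZI_disc)
  also have "\<dots> \<le> card ?B"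
    by (intro card_image_le finite_ZI_disc)
  finally have "card (ZI // ?R) \<le> card ?B" .
  then have "ideal_norm (gideal p) \<le> (2 * cmod p + 1)\<^sup>2"
    using card_ZI_disc_le[of "cmod p"] by (simp add: ideal_norm_eq_card_quotient)
  also have "\<dots> \<le> (3 * cmod p)\<^sup>2"
    using cmod_ge_1[OF p] by (intro power_mono) auto
  finally show ?thesis
    by (simp add: gnorm_eq_cmod_square power_mult_distrib)
qed

lemma prime_gideal_generator:
  assumes q: "is_prime_gideal q" and pos: "0 < ideal_norm q"
  shows "ideal_generator q \<in> ZI" "q = gideal (ideal_generator q)"
    and "2 \<le> gnorm (ideal_generator q)"
proof -
  let ?p = "ideal_generator q"
  have "is_gideal q" "q \<noteq> ZI"
    using q by (auto simp: is_prime_gideal_def)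
  show p: "?p \<in> ZI" "q = gideal ?p"
    using ideal_generator[OF \<open>is_gideal q\<close>] by auto
  then have "?p \<noteq> 0"
    using pos ideal_norm_gideal_0 by auto
  moreover have "gnorm ?p \<noteq> 1"
    using gideal_eq_ZI_if_gnorm_1[of ?p] p \<open>q \<noteq> ZI\<close> by auto
  ultimately show "2 \<le> gnorm ?p"
    using gnorm_ge_1[of ?p] gnorm_ge_2[of ?p] p(1) by fastforce
qed

lemma inverse_sum_squares_le_telescope:
  fixes n t :: real
  assumes "0 \<le> n" "0 < t"
  shows "2 / ((n + 1)\<^sup>2 + t\<^sup>2) \<le> 4 / (n + t) - 4 / (n + 1 + t)"
proof -
  have "(n + t) * (n + 1 + t) \<le> (n + 1 + t) * (n + 1 + t)"
    using assms by (intro mult_right_mono) auto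
  also have "\<dots> \<le> 2 * ((n + 1)\<^sup>2 + t\<^sup>2)"
    using zero_le_square[of "n + 1 - t"] by (simp add: power2_eq_square algebra_simps)
  finally have "2 / ((n + 1)\<^sup>2 + t\<^sup>2) \<le> 4 / ((n + t) * (n + 1 + t))"
    using assms by (simp add: divide_simps add_pos_nonneg)
  also have "\<dots> = 4 / (n + t) - 4 / (n + 1 + t)"
    using assms by (simp add: field_simps)
  finally show ?thesis .
qed

lemma sum_inverse_square_shifted_le:
  assumes s: "1 \<le> s"
  shows "(\<Sum>a\<in>{-L..L}. 1 / ((of_int a)\<^sup>2 + s)) \<le> 5 / sqrt s"
proof -
  let ?f = "\<lambda>a::int. 1 / ((of_int a)\<^sup>2 + s)"
  let ?t = "sqrt s"
  have t: "0 < ?t" "?t\<^sup>2 = s" "1 \<le> ?t"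
    using s by auto
  have telescope: "(\<Sum>a\<in>{-int n..int n}. ?f a) \<le> 1 / s + 4 / ?t - 4 / (real n + ?t)" for n
  proof (induction n)
    case 0
    then show ?case by simp
  next
    case (Suc n)
    have "(- real n - 1)\<^sup>2 = (real n + 1)\<^sup>2"
      by (simp add: power2_eq_square algebra_simps)
    then have "?f (- int n - 1) + ?f (int n + 1) = 2 / ((real n + 1)\<^sup>2 + ?t\<^sup>2)"
      using t by simp
    moreover have "{-int (Suc n)..int (Suc n)} = insert (- int n - 1) (insert (int n + 1) {-int n..int n})"
      by auto
    ultimately have "(\<Sum>a\<in>{-int (Suc n)..int (Suc n)}. ?f a) = 2 / ((real n + 1)\<^sup>2 + ?t\<^sup>2) + (\<Sum>a\<in>{-int n..int n}. ?f a)"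
      by simp
    also have "\<dots> \<le> (4 / (real n + ?t) - 4 / (real n + 1 + ?t)) + (1 / s + 4 / ?t - 4 / (real n + ?t))"
      using inverse_sum_squares_le_telescope[of "real n" ?t] t Suc.IH by (intro add_mono) auto
    finally show ?case
      by (simp add: algebra_simps)
  qed
  show ?thesis
  proof (cases "L < 0")
    case True
    then show ?thesis using s by simp
  next
    case False
    then have "(\<Sum>a\<in>{-L..L}. ?f a) \<le> 1 / s + 4 / ?t - 4 / (real (nat L) + ?t)"
      using telescope[of "nat L"] by simp
    moreover have "?t * 1 \<le> ?t * ?t"
      using t by (intro mult_left_mono) auto
    then have "1 / s \<le> 1 / ?t"
      using t by (intro divide_left_mono) (auto simp: power2_eq_square)
    moreover have "0 \<le> 4 / (real (nat L) + ?t)"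
      using t by simp
    ultimately show ?thesis by linarith
  qed
qed

lemma sum_power_from_2_le:
  fixes x :: real
  assumes "0 \<le> x" "x \<le> 1/2"
  shows "(\<Sum>k = 2..K. x ^ k) \<le> 2 * x\<^sup>2"
proof (cases "2 \<le> K")
  case True
  have "(1 - x) * (\<Sum>k = 2..K. x ^ k) = x\<^sup>2 - x ^ Suc K"
    using sum_gp_multiplied[OF True] by (simp add: power2_eq_square)
  also have "\<dots> \<le> x\<^sup>2"
    using assms by simp
  also have "\<dots> \<le> (1 - x) * (2 * x\<^sup>2)"
    using mult_right_mono[of 1 "2 * (1 - x)" "x\<^sup>2"] assms by (simp add: algebra_simps)
  finally show ?thesis
    using assms by (simp add: mult_le_cancel_left_pos)
next
  case False
  then show ?thesis by simp
qed

lemma inverse_square_le_mult: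
  fixes u v N :: real
  assumes "0 < u" "0 < v" "u + v \<le> 2 * N"
  shows "1 / N\<^sup>2 \<le> 1 / u * (1 / v)"
proof -
  have "4 * (u * v) \<le> (u + v) * (u + v)"
    using zero_le_square[of "u - v"] by (simp add: algebra_simps)
  also have "\<dots> \<le> (2 * N) * (2 * N)"
    using assms by (intro mult_mono) auto
  finally have "u * v \<le> N\<^sup>2"
    by (simp add: power2_eq_square)
  then show ?thesis
    using assms by (simp add: frac_le)
qed

text \<open>Bounding 1 / N(x)^2 by a product of one-variable terms reduces the sum to the
  square of a sum over a box, which telescopes.\<close>

lemma sum_inverse_gnorm_square_le:
  assumes F: "finite F" "F \<subseteq> ZI" and w: "2 \<le> w" and large: "\<And>x. x \<in> F \<Longrightarrow> w \<le> gnorm x"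
  shows "(\<Sum>x\<in>F. 1 / (gnorm x)\<^sup>2) \<le> 50 / w"
proof -
  define s where "s = w / 2"
  have s: "1 \<le> s" using w by (simp add: s_def)
  define f where "f a = 1 / ((of_int a)\<^sup>2 + s)" for a :: int
  define \<phi> where "\<phi> x = 1 / ((Re x)\<^sup>2 + s) * (1 / ((Im x)\<^sup>2 + s))" for x
  define L where "L = \<lfloor>\<Sum>x\<in>F. cmod x\<rfloor>"
  define j where "j = (\<lambda>(a, b). Complex (of_int a) (of_int b))"
  have "F \<subseteq> {x \<in> ZI. cmod x \<le> (\<Sum>x\<in>F. cmod x)}"
    using F by (auto intro!: member_le_sum)
  then have F_box: "F \<subseteq> j ` ({-L..L} \<times> {-L..L})"
    using ZI_disc_subset_box unfolding j_def L_def by blast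
  have "(\<Sum>x\<in>F. 1 / (gnorm x)\<^sup>2) \<le> (\<Sum>x\<in>F. \<phi> x)"
  proof (rule sum_mono)
    fix x assume "x \<in> F"
    then have "w \<le> gnorm x"
      by (rule large)
    then have "((Re x)\<^sup>2 + s) + ((Im x)\<^sup>2 + s) \<le> 2 * gnorm x"
      unfolding gnorm_def s_def by (simp add: field_simps)
    then show "1 / (gnorm x)\<^sup>2 \<le> \<phi> x"
      unfolding \<phi>_def using s by (intro inverse_square_le_mult) (auto intro: add_nonneg_pos)
  qed
  also have "\<dots> \<le> (\<Sum>x\<in>j ` ({-L..L} \<times> {-L..L}). \<phi> x)"
    using s by (intro sum_mono2 F_box) (auto simp: \<phi>_def)
  also have "\<dots> = (\<Sum>(a, b)\<in>{-L..L} \<times> {-L..L}. f a * f b)"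
    by (subst sum.reindex) (auto simp: inj_on_def j_def \<phi>_def f_def intro!: sum.cong)
  also have "\<dots> = (\<Sum>a\<in>{-L..L}. f a) * (\<Sum>b\<in>{-L..L}. f b)"
    by (simp add: sum.cartesian_product sum_product)
  also have "\<dots> \<le> (5 / sqrt s) * (5 / sqrt s)"
    using sum_inverse_square_shifted_le[OF s] s unfolding f_def
    by (intro mult_mono sum_nonneg) (auto intro: add_nonneg_nonneg)
  also have "\<dots> = 50 / w"
    using s by (simp add: s_def)
  finally show ?thesis .
qed

section \<open>Multiplicities of prime elements\<close>

lemma two_power_le_gnorm_if_gdvd:
  assumes "2 \<le> gnorm p" "gdvd (p ^ k) n" "n \<noteq> 0"
  shows "2 ^ k \<le> gnorm n"
proof -
  obtain c where c: "c \<in> ZI" "n = p ^ k * c"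
    using assms(2) by (auto simp: gdvd_def)
  then have "1 \<le> gnorm c"
    using assms(3) gnorm_ge_1 by auto
  have "(2::real) ^ k \<le> gnorm p ^ k"
    using assms(1) by (intro power_mono) auto
  also have "\<dots> \<le> gnorm p ^ k * gnorm c"
    using \<open>1 \<le> gnorm c\<close> mult_left_mono[of 1 "gnorm c" "gnorm p ^ k"] assms(1) by simp
  also have "\<dots> = gnorm n"
    using c by (simp add: gnorm_mult gnorm_power)
  finally show ?thesis .
qed

lemma gdvd_power_ideal_exp:
  assumes p: "p \<in> ZI" "2 \<le> gnorm p" and n: "n \<in> ZI" "n \<noteq> 0"
  shows "gdvd (p ^ ideal_exp (gideal p) n) n"
proof -
  define P where "P k \<longleftrightarrow> gdvd (p ^ k) n" for k
  have "ideal_exp (gideal p) n = (GREATEST k. P k)"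
    using p n by (simp add: ideal_exp_def P_def ideal_pow_gideal gideal_subset_iff_gdvd)
  moreover have "P (GREATEST k. P k)"
  proof (rule GreatestI_nat)
    show "P 0"
      using n by (auto simp: P_def gdvd_def)
  next
    fix k assume "P k"
    then have "real k \<le> gnorm n"
      using two_power_le_gnorm_if_gdvd[of p k n] p n less_exp[of k] unfolding P_def
      by (metis of_nat_less_iff of_nat_numeral of_nat_power less_le_trans less_imp_le)
    then show "k \<le> nat \<lceil>gnorm n\<rceil>"
      by linarith
  qed
  ultimately show ?thesis
    by (simp add: P_def)
qed

lemma ideal_exp_minus_1_le_card:
  assumes p: "p \<in> ZI" "2 \<le> gnorm p" and n: "n \<in> ZI" "n \<noteq> 0" "gnorm n \<le> real K"
  shows "real (ideal_exp (gideal p) n) - 1 \<le> real (card {k \<in> {2..K}. gdvd (p ^ k) n})"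
proof -
  let ?e = "ideal_exp (gideal p) n"
  obtain c where c: "c \<in> ZI" "n = p ^ ?e * c"
    using gdvd_power_ideal_exp[OF p n(1,2)] by (auto simp: gdvd_def)
  have "real ?e < 2 ^ ?e"
    using less_exp[of ?e] by (metis of_nat_less_iff of_nat_numeral of_nat_power)
  also have "\<dots> \<le> real K"
    using two_power_le_gnorm_if_gdvd[OF p(2) gdvd_power_ideal_exp[OF p n(1,2)] n(2)] n(3) by linarith
  finally have "?e \<le> K" by simp
  have "{2..?e} \<subseteq> {k \<in> {2..K}. gdvd (p ^ k) n}"
  proof
    fix k assume k: "k \<in> {2..?e}"
    then have "p ^ ?e = p ^ k * p ^ (?e - k)"
      by (metis atLeastAtMost_iff le_add_diff_inverse power_add)
    then have "n = p ^ k * (p ^ (?e - k) * c)"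
      using c(2) by (simp add: mult.assoc)
    then show "k \<in> {k \<in> {2..K}. gdvd (p ^ k) n}"
      using k \<open>?e \<le> K\<close> p c n by (auto simp: gdvd_def)
  qed
  then have "card {2..?e} \<le> card {k \<in> {2..K}. gdvd (p ^ k) n}"
    by (intro card_mono) auto
  then show ?thesis
    by simp
qed

text \<open>Counting the pairs (n, k) with p^k dividing n, first by n and then by k.\<close>

lemma sum_ideal_exp_minus_1_le:
  assumes p: "p \<in> ZI" "2 \<le> gnorm p" and S: "S \<subseteq> {n \<in> ZI. n \<noteq> 0 \<and> cmod n < R}"
  shows "(\<Sum>n\<in>S. real (ideal_exp (gideal p) n) - 1) \<le> 18 * R\<^sup>2 / (gnorm p)\<^sup>2"
proof -
  define K where "K = nat \<lceil>R\<^sup>2\<rceil>"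
  have finS: "finite S"
    using S by (rule finite_subset) (auto intro: finite_subset[OF _ finite_ZI_disc[of R]])
  have p0: "p \<noteq> 0"
    using p(2) by auto
  have "(\<Sum>n\<in>S. real (ideal_exp (gideal p) n) - 1) \<le> (\<Sum>n\<in>S. real (card {k \<in> {2..K}. gdvd (p ^ k) n}))"
  proof (rule sum_mono, rule ideal_exp_minus_1_le_card[OF p])
    fix n assume "n \<in> S"
    then have n: "n \<in> ZI" "n \<noteq> 0" "cmod n < R"
      using S by auto
    then have "(cmod n)\<^sup>2 \<le> R\<^sup>2"
      by (intro power_mono) auto
    then show "gnorm n \<le> real K"
      unfolding K_def gnorm_eq_cmod_square by linarith
    show "n \<in> ZI" "n \<noteq> 0" using n by auto
  qed
  also have "\<dots> = (\<Sum>k\<in>{2..K}. real (card {n \<in> S. gdvd (p ^ k) n}))"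
    unfolding real_of_card by (rule sum.swap_restrict) (auto simp: finS)
  also have "\<dots> \<le> (\<Sum>k\<in>{2..K}. 9 * R\<^sup>2 * (1 / gnorm p) ^ k)"
  proof (rule sum_mono)
    fix k
    have "card {n \<in> S. gdvd (p ^ k) n} \<le> card {n \<in> ZI. n \<noteq> 0 \<and> cmod n < R \<and> gdvd (p ^ k) n}"
      using S by (intro card_mono) (auto intro: finite_subset[OF _ finite_ZI_disc[of R]])
    then have "real (card {n \<in> S. gdvd (p ^ k) n}) \<le> 9 * R\<^sup>2 / gnorm (p ^ k)"
      using card_ZI_multiples_le[of "p ^ k" R] p p0 by simp
    then show "real (card {n \<in> S. gdvd (p ^ k) n}) \<le> 9 * R\<^sup>2 * (1 / gnorm p) ^ k"
      by (simp add: gnorm_power power_one_over)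
  qed
  also have "\<dots> = 9 * R\<^sup>2 * (\<Sum>k = 2..K. (1 / gnorm p) ^ k)"
    by (simp add: sum_distrib_left)
  also have "\<dots> \<le> 9 * R\<^sup>2 * (2 * (1 / gnorm p)\<^sup>2)"
    using p(2) by (intro mult_left_mono sum_power_from_2_le) auto
  finally show ?thesis
    by (simp add: power_one_over)
qed

lemma Aset_subset_disc:
  assumes "NN \<in> ZI"
  shows "Aset NN \<subseteq> {n \<in> ZI. n \<noteq> 0 \<and> cmod n < 2 * cmod NN}"
proof
  fix n assume "n \<in> Aset NN"
  then obtain p where p: "n = NN - p" "p \<in> ZI" "gnorm p < gnorm NN"
    by (auto simp: Aset_def Pset_def gprime_def)
  then have "cmod p < cmod NN"
    by (simp add: gnorm_eq_cmod_square power_less_imp_less_base)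
  moreover have "cmod n \<le> cmod NN + cmod p"
    unfolding p(1) by (rule norm_triangle_ineq4)
  ultimately show "n \<in> {n \<in> ZI. n \<noteq> 0 \<and> cmod n < 2 * cmod NN}"
    using p assms by auto
qed

lemma finite_Aset:
  assumes "NN \<in> ZI"
  shows "finite (Aset NN)"
proof (rule finite_subset[OF Aset_subset_disc[OF assms]])
  show "finite {n \<in> ZI. n \<noteq> 0 \<and> cmod n < 2 * cmod NN}"
    by (rule finite_subset[OF _ finite_ZI_disc[of "2 * cmod NN"]]) auto
qed

definition prime_gideals_between :: "real \<Rightarrow> real \<Rightarrow> complex set set" where
  "prime_gideals_between z y = {q. is_prime_gideal q \<and> z \<le> ideal_norm q \<and> ideal_norm q < y}"

definition sifted :: "complex \<Rightarrow> real \<Rightarrow> complex set" where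
  "sifted NN z = {n \<in> Aset NN. ideal_sum (gideal n) (PP NN z) = ZI}"

lemma finite_prime_gideals_between:
  assumes "0 < z"
  shows "finite (prime_gideals_between z y)"
proof (rule finite_subset)
  show "prime_gideals_between z y \<subseteq> gideal ` {p \<in> ZI. cmod p \<le> y}"
  proof
    fix q assume q: "q \<in> prime_gideals_between z y"
    let ?p = "ideal_generator q"
    have p: "?p \<in> ZI" "q = gideal ?p" "2 \<le> gnorm ?p"
      using prime_gideal_generator[of q] q assms by (auto simp: prime_gideals_between_def)
    then have "cmod ?p \<le> ideal_norm q"
      using cmod_le_ideal_norm_gideal[of ?p] q assms by (auto simp: prime_gideals_between_def)
    then show "q \<in> gideal ` {p \<in> ZI. cmod p \<le> y}"
      using p q by (auto simp: prime_gideals_between_def)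
  qed
qed (simp add: finite_ZI_disc)

lemma T1_minus_sum_sift:
  assumes "NN \<in> ZI" "0 < z"
  shows "T1 NN z y - (\<Sum>q\<in>prime_gideals_between z y. real (sift (Aq NN q) NN z)) =
    (\<Sum>q\<in>prime_gideals_between z y. \<Sum>n\<in>{n \<in> sifted NN z. gideal n \<subseteq> q}. real (ideal_exp q n) - 1)"
proof -
  let ?Q = "prime_gideals_between z y"
  have "T1 NN z y = (\<Sum>n\<in>sifted NN z. \<Sum>q\<in>{q \<in> ?Q. gideal n \<subseteq> q}. real (ideal_exp q n))"
    by (simp add: T1_def sifted_def prime_gideals_between_def conj_assoc)
  also have "\<dots> = (\<Sum>q\<in>?Q. \<Sum>n\<in>{n \<in> sifted NN z. gideal n \<subseteq> q}. real (ideal_exp q n))"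
    using assms finite_Aset finite_prime_gideals_between
    by (intro sum.swap_restrict) (auto simp: sifted_def)
  moreover have "real (sift (Aq NN q) NN z) = (\<Sum>n\<in>{n \<in> sifted NN z. gideal n \<subseteq> q}. 1)" for q
  proof -
    have "{n \<in> Aq NN q. ideal_sum (gideal n) (PP NN z) = ZI} = {n \<in> sifted NN z. gideal n \<subseteq> q}"
      by (auto simp: Aq_def sifted_def)
    then show ?thesis
      by (simp add: sift_def)
  qed
  ultimately show ?thesis
    by (simp add: sum_subtractf)
qed

lemma sum_sifted_ideal_exp_minus_1_le:
  assumes "NN \<in> ZI" "is_prime_gideal q" "0 < ideal_norm q"
  shows "(\<Sum>n\<in>{n \<in> sifted NN z. gideal n \<subseteq> q}. real (ideal_exp q n) - 1)
    \<le> 72 * gnorm NN / (gnorm (ideal_generator q))\<^sup>2"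
proof -
  let ?p = "ideal_generator q"
  have p: "?p \<in> ZI" "q = gideal ?p" "2 \<le> gnorm ?p"
    using prime_gideal_generator assms(2,3) by auto
  have "{n \<in> sifted NN z. gideal n \<subseteq> q} \<subseteq> {n \<in> ZI. n \<noteq> 0 \<and> cmod n < 2 * cmod NN}"
    using Aset_subset_disc[OF assms(1)] by (auto simp: sifted_def)
  then have "(\<Sum>n\<in>{n \<in> sifted NN z. gideal n \<subseteq> q}. real (ideal_exp (gideal ?p) n) - 1)
      \<le> 18 * (2 * cmod NN)\<^sup>2 / (gnorm ?p)\<^sup>2"
    by (rule sum_ideal_exp_minus_1_le[OF p(1,3)])
  then show ?thesis
    using p(2) by (simp add: gnorm_eq_cmod_square power_mult_distrib)
qed

lemma sum_prime_gideals_inverse_gnorm_square_le: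
  assumes z: "2 \<le> z"
  shows "(\<Sum>q\<in>prime_gideals_between z y. 1 / (gnorm (ideal_generator q))\<^sup>2) \<le> 450 / z"
proof -
  let ?Q = "prime_gideals_between z y"
  have gen: "ideal_generator q \<in> ZI" "q = gideal (ideal_generator q)" "2 \<le> gnorm (ideal_generator q)"
    if "q \<in> ?Q" for q
    using prime_gideal_generator[of q] that z by (auto simp: prime_gideals_between_def)
  have large: "z / 9 \<le> gnorm (ideal_generator q)" if "q \<in> ?Q" for q
    using ideal_norm_gideal_le[of "ideal_generator q"] gen[OF that] that
    by (auto simp: prime_gideals_between_def)
  have "inj_on ideal_generator ?Q"
    by (metis gen inj_onI)
  then have "(\<Sum>q\<in>?Q. 1 / (gnorm (ideal_generator q))\<^sup>2) = (\<Sum>p\<in>ideal_generator ` ?Q. 1 / (gnorm p)\<^sup>2)"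
    by (simp add: sum.reindex)
  also have "\<dots> \<le> 50 / max 2 (z / 9)"
    using finite_prime_gideals_between[of z y] z gen large
    by (intro sum_inverse_gnorm_square_le) auto
  also have "\<dots> \<le> 50 / (z / 9)"
    using z by (intro divide_left_mono) auto
  also have "\<dots> = 450 / z"
    by simp
  finally show ?thesis .
qed

theorem lemma3p2:
  "\<exists>C::real. \<forall>(NN::complex) (y::real) (z::real).
     NN \<in> ZI \<and> NN \<noteq> 0 \<and> 2 \<le> z \<and> z \<le> y \<longrightarrow>
     T1 NN z y \<le>
       (\<Sum>q\<in>{q. is_prime_gideal q \<and> z \<le> ideal_norm q \<and> ideal_norm q < y}.
          real (sift (Aq NN q) NN z)) + C * gnorm NN / z"
proof (intro exI allI impI)
  fix NN :: complex and y z :: real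
  assume "NN \<in> ZI \<and> NN \<noteq> 0 \<and> 2 \<le> z \<and> z \<le> y"
  then have NN: "NN \<in> ZI" and z: "2 \<le> z" by auto
  let ?Q = "prime_gideals_between z y"
  have "T1 NN z y - (\<Sum>q\<in>?Q. real (sift (Aq NN q) NN z)) =
      (\<Sum>q\<in>?Q. \<Sum>n\<in>{n \<in> sifted NN z. gideal n \<subseteq> q}. real (ideal_exp q n) - 1)"
    using NN z by (intro T1_minus_sum_sift) auto
  also have "\<dots> \<le> (\<Sum>q\<in>?Q. 72 * gnorm NN / (gnorm (ideal_generator q))\<^sup>2)"
    using NN z by (intro sum_mono sum_sifted_ideal_exp_minus_1_le) (auto simp: prime_gideals_between_def)
  also have "\<dots> = 72 * gnorm NN * (\<Sum>q\<in>?Q. 1 / (gnorm (ideal_generator q))\<^sup>2)"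
    by (simp add: sum_distrib_left)
  also have "\<dots> \<le> 72 * gnorm NN * (450 / z)"
    using z by (intro mult_left_mono sum_prime_gideals_inverse_gnorm_square_le) (auto simp: gnorm_nonneg)
  finally show "T1 NN z y \<le> (\<Sum>q\<in>{q. is_prime_gideal q \<and> z \<le> ideal_norm q \<and> ideal_norm q < y}.
      real (sift (Aq NN q) NN z)) + 32400 * gnorm NN / z"
    by (simp add: prime_gideals_between_def)
qed

end
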